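(* Let $\mathfrak g$ be of type $A_n$ and $\lambda=\sum_{i=1}^n r_i\omega_i\in P^+$. Define $\lambda^1,\lambda^2$ as follows: if all $r_i$ are even, $\lambda^1=\lambda^2=\lambda/2$... more precisely $\lambda^1=\lambda^2=\sum_i (r_i/2)\omega_i$; otherwise let $i_0<i_1<\dots<i_p$ be the indices $i$ with $r_i$ odd, $I_+=I\setminus\{i_0,\dots,i_p\}$, and set $$\lambda^1=\sum_{s=0}^p\frac{r_{i_s}+(-1)^s}{2}\,\omega_{i_s}+\sum_{i\in I_+}\frac{r_i}{2}\,\omega_i,\qquad\lambda^2=\lambda-\lambda^1.$$ Let $\boldsymbol\lambda_{\max}=(\lambda^1,\lambda^2)\in P^+(\lambda,2)$. Then either $\lambda^1=\lambda^2$ or $\lambda^2=\lambda^1-w^{-1}\omega_i$ for some $w\in W$ and $i\in I$. In either case $\boldsymbol\lambda_{\max}$ is the unique maximal element of $P^+(\lambda,2)/\!\sim$: every $\boldsymbol\mu\in P^+(\lambda,2)$ satisfies $\boldsymbol\mu\preceq\boldsymbol\lambda_{\max}$.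
   Context: $\mathfrak g=\mathfrak{sl}_{n+1}$ with simple roots indexed by $I=\{1,\dots,n\}$, fundamental weights $\omega_i$, positive roots $R^+$, coroots $h_\alpha$, Weyl group $W$, dominant integral weights $P^+$. $P^+(\lambda,2)=\{(\lambda_1,\lambda_2)\in(P^+)^2:\lambda_1+\lambda_2=\lambda\}$; $(\lambda_1,\lambda_2)\preceq(\mu_1,\mu_2)$ means $\min\{\lambda_1(h_\alpha),\lambda_2(h_\alpha)\}\le\min\{\mu_1(h_\alpha),\mu_2(h_\alpha)\}$ for all $\alpha\in R^+$; $\sim$ means equality of these minima for all $\alpha$. *)

theory Defs
  imports Main "HOL-Library.Function_Algebras"
begin

text \<open>Weights of sl_(n+1) are encoded by their coordinates in the basis of
fundamental weights: a weight mu is a function nat => int, mu i being the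
coefficient of omega_i (i in I = {1..n}); coordinates outside I are 0.\<close>

type_synonym weight = "nat \<Rightarrow> int"

definition is_weight :: "nat \<Rightarrow> weight \<Rightarrow> bool" where
  "is_weight n mu \<longleftrightarrow> (\<forall>i. i \<notin> {1..n} \<longrightarrow> mu i = 0)"

definition dominant :: "nat \<Rightarrow> weight \<Rightarrow> bool" where
  "dominant n mu \<longleftrightarrow> is_weight n mu \<and> (\<forall>i\<in>{1..n}. 0 \<le> mu i)"

definition omega :: "nat \<Rightarrow> weight" where
  "omega i = (\<lambda>k. if k = i then 1 else 0)"

text \<open>Simple root alpha_i in fundamental-weight coordinates (columns of the
Cartan matrix of type A_n).\<close>
definition simple_root :: "nat \<Rightarrow> nat \<Rightarrow> weight" where
  "simple_root n i = (\<lambda>k. if k \<in> {1..n} then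
      (if k = i then 2 else if k + 1 = i \<or> k = i + 1 then -1 else 0) else 0)"

definition simple_refl :: "nat \<Rightarrow> nat \<Rightarrow> weight \<Rightarrow> weight" where
  "simple_refl n i mu = (\<lambda>k. mu k - mu i * simple_root n i k)"

inductive_set weyl :: "nat \<Rightarrow> (weight \<Rightarrow> weight) set" for n where
  weyl_id: "id \<in> weyl n"
| weyl_step: "w \<in> weyl n \<Longrightarrow> i \<in> {1..n} \<Longrightarrow> simple_refl n i \<circ> w \<in> weyl n"

text \<open>Positive roots of A_n: alpha_i + ... + alpha_j, 1 <= i <= j <= n,
encoded by the pair (i,j); mu(h_alpha) = mu_i + ... + mu_j.\<close>
definition pos_roots :: "nat \<Rightarrow> (nat \<times> nat) set" where
  "pos_roots n = {(i, j). 1 \<le> i \<and> i \<le> j \<and> j \<le> n}"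

definition eval_coroot :: "weight \<Rightarrow> nat \<times> nat \<Rightarrow> int" where
  "eval_coroot mu a = (\<Sum>k = fst a..snd a. mu k)"

definition P2 :: "nat \<Rightarrow> weight \<Rightarrow> (weight \<times> weight) set" where
  "P2 n lam = {(l1, l2). dominant n l1 \<and> dominant n l2 \<and> l1 + l2 = lam}"

definition preceq :: "nat \<Rightarrow> weight \<times> weight \<Rightarrow> weight \<times> weight \<Rightarrow> bool" where
  "preceq n l m \<longleftrightarrow> (\<forall>a\<in>pos_roots n.
      min (eval_coroot (fst l) a) (eval_coroot (snd l) a)
      \<le> min (eval_coroot (fst m) a) (eval_coroot (snd m) a))"

definition odd_rank :: "weight \<Rightarrow> nat \<Rightarrow> nat" where
  "odd_rank lam i = card {j. 1 \<le> j \<and> j < i \<and> odd (lam j)}"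

definition lam1 :: "nat \<Rightarrow> weight \<Rightarrow> weight" where
  "lam1 n lam = (\<lambda>i. if i \<in> {1..n} then
      (if odd (lam i) then (lam i + (-1) ^ odd_rank lam i) div 2 else lam i div 2)
      else 0)"

definition lam2 :: "nat \<Rightarrow> weight \<Rightarrow> weight" where
  "lam2 n lam = lam - lam1 n lam"

end

theory Submission
  imports Defs
begin

text \<open>
  Write eps S for the weight of sl_(n+1) given by the sum of the
  standard vectors e_j, j in S, for S a subset of {1..n+1}; in fundamental-weight
  coordinates its j-th entry is [j in S] - [j+1 in S].  The key observation is
  that lambda^1 - lambda^2 = eps S_lam, where S_lam collects the positions x at
  which an even number of odd coordinates of lambda precede x.  Two facts about
  the weights eps S then give the proposition:
  (1) the simple reflection s_k swaps k and k+1 in S, so by moving elements of S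
      to the left eps S is W-conjugate to eps {1..m} = omega_m, m = card S;
      this yields lambda^2 = lambda^1 - w^-1 omega_m unless S_lam is all of
      {1..n+1}, in which case lambda^1 = lambda^2;
  (2) every coroot value of eps S is a telescoping sum, hence lies in {-1,0,1};
      so lambda^1(h_alpha) and lambda^2(h_alpha) differ by at most one, and a
      pair of integers with fixed sum and difference at most one maximises the
      minimum, which is the maximality of (lambda^1, lambda^2).
\<close>

definition eps :: "nat \<Rightarrow> nat set \<Rightarrow> weight" where
  "eps n S = (\<lambda>j. if j \<in> {1..n}
      then (if j \<in> S then 1 else 0) - (if Suc j \<in> S then 1 else 0) else 0)"

lemma eps_initial_segment: "m \<in> {1..n} \<Longrightarrow> eps n {1..m} = omega m"
  by (rule ext) (auto simp: eps_def omega_def)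

lemma simple_refl_eps:
  assumes "k \<in> {1..n}" "k \<notin> S" "Suc k \<in> S"
  shows "simple_refl n k (eps n S) = eps n (insert k (S - {Suc k}))"
  using assms by (intro ext) (auto simp: simple_refl_def simple_root_def eps_def)

text \<open>Coroot values of eps S telescope, so they lie in {-1, 0, 1}.\<close>
lemma eval_coroot_eps:
  assumes "(i, j) \<in> pos_roots n"
  shows "eval_coroot (eps n S) (i, j) = (if i \<in> S then 1 else 0) - (if Suc j \<in> S then 1 else 0)"
proof -
  define f where "f x = (if x \<in> S then 1 else (0::int))" for x
  have ij: "1 \<le> i" "i \<le> j" "j \<le> n" using assms by (auto simp: pos_roots_def)
  have "eval_coroot (eps n S) (i, j) = (\<Sum>k = i..j. - (f (Suc k) - f k))"
    unfolding eval_coroot_def using ij by (intro sum.cong) (auto simp: eps_def f_def)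
  also have "\<dots> = - (\<Sum>k = i..j. f (Suc k) - f k)"
    by (rule sum_negf)
  also have "\<dots> = - (f (Suc j) - f i)"
    using ij by (simp add: sum_Suc_diff)
  finally show ?thesis by (simp add: f_def)
qed

lemma abs_eval_coroot_eps_le_1:
  "a \<in> pos_roots n \<Longrightarrow> \<bar>eval_coroot (eps n S) a\<bar> \<le> 1"
  using eval_coroot_eps[of "fst a" "snd a"] by simp

text \<open>Simple reflections are involutions; hence every Weyl group element is
  injective, which makes the inverse in the statement meaningful.\<close>
lemma simple_refl_involutive: "i \<in> {1..n} \<Longrightarrow> simple_refl n i (simple_refl n i mu) = mu"
  by (rule ext) (simp add: simple_refl_def simple_root_def algebra_simps)

lemma weyl_inj: "w \<in> weyl n \<Longrightarrow> inj w"
proof (induction rule: weyl.induct)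
  case weyl_id
  then show ?case by simp
next
  case (weyl_step w i)
  have "inj (simple_refl n i)"
    using simple_refl_involutive[OF weyl_step.hyps(2)] by (metis injI)
  then show ?case using weyl_step.IH by (rule inj_compose)
qed

lemma weyl_comp: "w1 \<in> weyl n \<Longrightarrow> w2 \<in> weyl n \<Longrightarrow> w1 \<circ> w2 \<in> weyl n"
  by (induction w1 rule: weyl.induct) (auto simp: comp_assoc intro: weyl.weyl_step)

lemma gapless_set_is_initial_segment:
  assumes fin: "finite S" and pos: "0 \<notin> S"
    and gapless: "\<And>k. 1 \<le> k \<Longrightarrow> Suc k \<in> S \<Longrightarrow> k \<in> S"
  shows "S = {1..card S}"
proof -
  have down: "y \<in> S" if x: "x \<in> S" and y: "1 \<le> y" "y \<le> x" for x y
    using y(2)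
  proof (induction rule: inc_induct)
    case base
    show ?case by (rule x)
  next
    case (step m)
    have "1 \<le> m" using y(1) step.hyps(1) by simp
    then show ?case using gapless step.IH by blast
  qed
  show ?thesis
  proof (cases "S = {}")
    case False
    define M where "M = Max S"
    have "M \<in> S" using False fin by (simp add: M_def)
    have "S \<subseteq> {1..M}"
    proof
      fix x assume "x \<in> S"
      have "x \<noteq> 0" using \<open>x \<in> S\<close> pos by metis
      moreover have "x \<le> M" using \<open>x \<in> S\<close> fin by (simp add: M_def)
      ultimately show "x \<in> {1..M}" by simp
    qed
    moreover have "{1..M} \<subseteq> S" using down[OF \<open>M \<in> S\<close>] by auto
    ultimately have "S = {1..M}" by (rule antisym)
    then show ?thesis by simp
  qed simp
qed

text \<open>Part (1) of the plan: eps S lies in the W-orbit of omega_(card S).  Induction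
  on the sum of the elements of S; each simple reflection moving an element one
  step to the left decreases it.\<close>
lemma eps_in_orbit_of_omega:
  assumes "S \<subseteq> {1..Suc n}" "card S \<in> {1..n}"
  shows "\<exists>w\<in>weyl n. w (eps n S) = omega (card S)"
  using assms
proof (induction "\<Sum>S" arbitrary: S rule: less_induct)
  case less
  have fin: "finite S" using less.prems(1) finite_subset by blast
  show ?case
  proof (cases "\<exists>k. 1 \<le> k \<and> k \<notin> S \<and> Suc k \<in> S")
    case False
    then have "S = {1..card S}"
      using less.prems(1) by (intro gapless_set_is_initial_segment[OF fin]) auto
    then have "eps n S = eps n {1..card S}" by (rule arg_cong)
    also have "\<dots> = omega (card S)" by (rule eps_initial_segment[OF less.prems(2)])
    finally have "id (eps n S) = omega (card S)" by simp
    then show ?thesis using weyl.weyl_id by blast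
  next
    case True
    then obtain k where k: "1 \<le> k" "k \<notin> S" "Suc k \<in> S" by blast
    have kn: "k \<in> {1..n}" using k less.prems(1) by auto
    define S' where "S' = insert k (S - {Suc k})"
    have "card S' = Suc (card (S - {Suc k}))"
      unfolding S'_def using fin k(2) by (intro card_insert_disjoint) auto
    also have "\<dots> = card S" using card.remove[OF fin k(3)] by (rule sym)
    finally have card_S': "card S' = card S" .
    have "\<Sum>S' < \<Sum>S" using fin k by (simp add: S'_def sum.remove)
    moreover have "S' \<subseteq> {1..Suc n}" using S'_def kn less.prems(1) by auto
    ultimately have "\<exists>w\<in>weyl n. w (eps n S') = omega (card S')"
      using card_S' less.prems(2) by (intro less.hyps) auto
    then obtain w where w: "w \<in> weyl n" "w (eps n S') = omega (card S)"
      using card_S' by auto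
    have "(w \<circ> simple_refl n k) (eps n S) = omega (card S)"
      using simple_refl_eps[OF kn k(2,3)] w(2) S'_def by simp
    moreover have "w \<circ> simple_refl n k \<in> weyl n"
      using weyl_comp[OF w(1) weyl.weyl_step[OF weyl.weyl_id kn]] by simp
    ultimately show ?thesis by blast
  qed
qed

text \<open>Positions preceded by an even number of odd coordinates of lambda: there
  lambda^1 takes the larger half of an odd coordinate.\<close>
definition even_rank_set :: "nat \<Rightarrow> weight \<Rightarrow> nat set" where
  "even_rank_set n lam = {x \<in> {1..Suc n}. even (odd_rank lam x)}"

lemma odd_rank_Suc:
  "odd_rank lam (Suc j) = odd_rank lam j + (if 1 \<le> j \<and> odd (lam j) then 1 else 0)"
proof -
  have "{x. 1 \<le> x \<and> x < Suc j \<and> odd (lam x)} =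
        {x. 1 \<le> x \<and> x < j \<and> odd (lam x)} \<union> (if 1 \<le> j \<and> odd (lam j) then {j} else {})"
    using less_Suc_eq by auto
  moreover have "finite {x. 1 \<le> x \<and> x < j \<and> odd (lam x)}" by simp
  ultimately show ?thesis unfolding odd_rank_def by auto
qed

lemma odd_rank_1: "odd_rank lam (Suc 0) = 0"
proof -
  have "{j. 1 \<le> j \<and> j < Suc 0 \<and> odd (lam j)} = {}" by auto
  then show ?thesis by (simp add: odd_rank_def)
qed

lemma lam1_minus_lam2:
  assumes "dominant n lam"
  shows "lam1 n lam - lam2 n lam = eps n (even_rank_set n lam)"
proof
  fix j
  show "(lam1 n lam - lam2 n lam) j = eps n (even_rank_set n lam) j"
  proof (cases "j \<in> {1..n}")
    case False
    then show ?thesis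
      using assms by (auto simp: lam2_def lam1_def eps_def dominant_def is_weight_def)
  next
    case True
    have rank: "odd_rank lam (Suc j) = odd_rank lam j + (if odd (lam j) then 1 else 0)"
      using odd_rank_Suc[of lam j] True by simp
    consider (even) "even (lam j)"
      | (odd_even) "odd (lam j)" "even (odd_rank lam j)"
      | (odd_odd) "odd (lam j)" "odd (odd_rank lam j)" by blast
    then show ?thesis
    proof cases
      case even
      then have "2 * (lam j div 2) = lam j" by simp
      then show ?thesis using True even rank by (simp add: lam2_def lam1_def eps_def even_rank_set_def)
    next
      case odd_even
      have "2 * ((lam j + 1) div 2) = lam j + 1"
        by (rule even_two_times_div_two) (simp add: odd_even)
      then show ?thesis using True odd_even rank by (simp add: lam2_def lam1_def eps_def even_rank_set_def)
    next
      case odd_odd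
      have "2 * ((lam j - 1) div 2) = lam j - 1"
        by (rule even_two_times_div_two) (simp add: odd_odd)
      then show ?thesis using True odd_odd rank by (simp add: lam2_def lam1_def eps_def even_rank_set_def)
    qed
  qed
qed

lemma eval_coroot_add: "eval_coroot (f + g) a = eval_coroot f a + eval_coroot g a"
  by (simp add: eval_coroot_def sum.distrib)

lemma eval_coroot_diff: "eval_coroot (f - g) a = eval_coroot f a - eval_coroot g a"
  by (simp add: eval_coroot_def sum_subtractf)

lemma balanced_pair_is_maximal:
  assumes balanced: "\<And>a. a \<in> pos_roots n \<Longrightarrow> \<bar>eval_coroot l1 a - eval_coroot l2 a\<bar> \<le> 1"
    and sum: "fst mu + snd mu = l1 + l2"
  shows "preceq n mu (l1, l2)"
  unfolding preceq_def
proof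
  fix a assume "a \<in> pos_roots n"
  have "eval_coroot (fst mu) a + eval_coroot (snd mu) a = eval_coroot l1 a + eval_coroot l2 a"
    using sum by (metis eval_coroot_add)
  with balanced[OF \<open>a \<in> pos_roots n\<close>] show "min (eval_coroot (fst mu) a) (eval_coroot (snd mu) a)
      \<le> min (eval_coroot (fst (l1, l2)) a) (eval_coroot (snd (l1, l2)) a)"
    by (simp add: min_def abs_le_iff)
qed

text \<open>Both halves are dominant: rounding an odd nonnegative coordinate up or
  down keeps it between zero and the coordinate itself.\<close>
lemma lam_max_in_P2:
  assumes "dominant n lam"
  shows "(lam1 n lam, lam2 n lam) \<in> P2 n lam"
proof -
  have half_nonneg: "0 \<le> x + (-1) ^ r" and half_le: "(x + (-1) ^ r) div 2 \<le> x"
    if "odd x" "0 \<le> x" for x :: int and r :: nat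
  proof -
    have "1 \<le> x" using that by (cases "x = 0") auto
    then show "0 \<le> x + (-1) ^ r" "(x + (-1) ^ r) div 2 \<le> x"
      by (auto simp: minus_one_power_iff)
  qed
  have "dominant n (lam1 n lam)"
    using assms half_nonneg
    by (auto simp: dominant_def is_weight_def lam1_def pos_imp_zdiv_nonneg_iff)
  moreover have "dominant n (lam2 n lam)"
    using assms half_le by (auto simp: dominant_def is_weight_def lam1_def lam2_def)
  ultimately show ?thesis by (simp add: P2_def lam2_def)
qed

lemma lam_max_maximal:
  assumes "dominant n lam" "mu \<in> P2 n lam"
  shows "preceq n mu (lam1 n lam, lam2 n lam)"
proof (rule balanced_pair_is_maximal)
  fix a assume "a \<in> pos_roots n"
  then show "\<bar>eval_coroot (lam1 n lam) a - eval_coroot (lam2 n lam) a\<bar> \<le> 1"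
    unfolding eval_coroot_diff[symmetric] lam1_minus_lam2[OF assms(1)]
    by (rule abs_eval_coroot_eps_le_1)
next
  show "fst mu + snd mu = lam1 n lam + lam2 n lam"
    using assms(2) by (auto simp: P2_def lam2_def)
qed

text \<open>The dichotomy: S_lam always contains 1, and it is all of {1..n+1} exactly
  when lambda^1 = lambda^2; otherwise part (1) applies with i = card S_lam.\<close>
lemma lam1_lam2_alternative:
  assumes "dominant n lam"
  shows "lam1 n lam = lam2 n lam \<or>
         (\<exists>w\<in>weyl n. \<exists>i\<in>{1..n}. lam2 n lam = lam1 n lam - inv w (omega i))"
proof (cases "lam1 n lam = lam2 n lam")
  case distinct: False
  define S where "S = even_rank_set n lam"
  have diff: "lam1 n lam - lam2 n lam = eps n S"
    using lam1_minus_lam2[OF assms] by (simp add: S_def)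
  have sub: "S \<subseteq> {1..Suc n}" by (auto simp: S_def even_rank_set_def)
  have fin: "finite S" using sub by (rule finite_subset) simp
  have "1 \<in> S" by (simp add: S_def even_rank_set_def odd_rank_1)
  then have "1 \<le> card S" using fin by (auto simp: Suc_le_eq card_gt_0_iff)
  moreover have "S \<noteq> {1..Suc n}"
  proof
    assume "S = {1..Suc n}"
    then have "eps n S = 0" by (auto simp: eps_def)
    with diff distinct show False by (simp add: right_minus_eq)
  qed
  then have "card S < card {1..Suc n}" using sub by (intro psubset_card_mono) auto
  ultimately have card: "card S \<in> {1..n}" by simp
  obtain w where w: "w \<in> weyl n" "w (eps n S) = omega (card S)"
    using eps_in_orbit_of_omega[OF sub card] by blast
  have "inv w (omega (card S)) = eps n S"
    using w weyl_inj[OF w(1)] by (metis inv_f_f)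
  then have "lam2 n lam = lam1 n lam - inv w (omega (card S))"
    using diff by (simp add: algebra_simps)
  then show ?thesis
    using w(1) card by blast
qed simp

theorem proposition5p3:
  fixes n :: nat and lam :: weight
  assumes "1 \<le> n" and "dominant n lam"
  shows "(lam1 n lam = lam2 n lam \<or>
          (\<exists>w\<in>weyl n. \<exists>i\<in>{1..n}. lam2 n lam = lam1 n lam - inv w (omega i)))
       \<and> (lam1 n lam, lam2 n lam) \<in> P2 n lam
       \<and> (\<forall>mu\<in>P2 n lam. preceq n mu (lam1 n lam, lam2 n lam))"
  using lam1_lam2_alternative[OF assms(2)] lam_max_in_P2[OF assms(2)]
    lam_max_maximal[OF assms(2)] by simp

end
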